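(* Let $n\ge 2$, $K\ge 0$ and $p\in\mathbb{Z}$. Let $I_p=\{\mathbf{k}\in\mathbb{Z}_{\ge0}^n:\ |\mathbf{k}|=K,\ k_1\ge k_2+1-p,\ k_2\ge p\}$ and $II_p=\{\mathbf{k}\in\mathbb{Z}_{\ge0}^n:\ |\mathbf{k}|=K,\ k_1\ge -p,\ k_2\ge k_1+1+p\}$, and define $\phi_p:I_p\to II_p$ and $\psi_p:II_p\to I_p$ both by $(k_1,k_2,k_3,\dots,k_n)\mapsto(k_2-p,k_1+p,k_3,\dots,k_n)$. Then: (1) $\phi_p$ and $\psi_p$ are well defined and establish bijections between $I_p$ and $II_p$; (2) for every $\mathbf{k}\in I_p$ and generic values of the remaining variables, \[ \operatorname{Res}_{u_1=u_2q^p}X_{\mathbf{k}}(\mathbf{u};\mathbf{v})+\operatorname{Res}_{u_1=u_2q^p}X_{\phi_p(\mathbf{k})}(\mathbf{u};\mathbf{v})=0, \qquad \operatorname{Res}_{v_2=v_1q^p}Y_{\mathbf{k}}(\mathbf{u};\mathbf{v})+\operatorname{Res}_{v_2=v_1q^p}Y_{\phi_p(\mathbf{k})}(\mathbf{u};\mathbf{v})=0, \] where the residues are taken in the variable $u_1$ (respectively $v_2$).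
   Context: Fix square roots of the complex variables $u_i,v_a,t,q$ and interpret $z^{1/2}$ for monomials $z$ in these variables multiplicatively. For an integer $m\ge0$ the symmetric $q$-Pochhammer symbol is $[z;q]_m=\prod_{l=0}^{m-1}(q^{l/2}z^{1/2}-q^{-l/2}z^{-1/2})$ (empty product $=1$). For $\mathbf{k}\in\mathbb{Z}_{\ge0}^n$ with $|\mathbf{k}|=k_1+\dots+k_n$, $\mathbf{u}=(u_1,\dots,u_n)$, $\mathbf{v}=(v_1,\dots,v_n)$, define $X_{\mathbf{k}}(\mathbf{u};\mathbf{v})=\prod_{i=1}^n\frac{[qt;q]_{k_i}}{[q;q]_{k_i}}\prod_{i\ne j}\frac{[t^{-1}q^{-k_j}u_i/u_j;q]_{k_i}}{[q^{-k_j}u_i/u_j;q]_{k_i}}\prod_{a,j=1}^n\frac{[tu_j/v_a;q]_{k_j}}{[u_j/v_a;q]_{k_j}}$ and $Y_{\mathbf{k}}(\mathbf{u};\mathbf{v})=\prod_{a=1}^n\frac{[qt;q]_{k_a}}{[q;q]_{k_a}}\prod_{a\ne b}\frac{[t^{-1}q^{-k_a}v_a/v_b;q]_{k_b}}{[q^{-k_a}v_a/v_b;q]_{k_b}}\prod_{a,j=1}^n\frac{[tu_j/v_a;q]_{k_a}}{[u_j/v_a;q]_{k_a}}$, with $t,q$ generic parameters. *)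

theory Defs
  imports "HOL-Complex_Analysis.Complex_Analysis"
begin

text \<open>All variables are represented by their fixed square roots:
  su i = u_i^(1/2), sv a = v_a^(1/2), st = t^(1/2), sq = q^(1/2).
  A q-Pochhammer symbol [z;q]_m is given via s = z^(1/2):
  [z;q]_m = prod_{l<m} (q^(l/2) z^(1/2) - q^(-l/2) z^(-1/2)).\<close>

definition qpoch :: "complex \<Rightarrow> complex \<Rightarrow> nat \<Rightarrow> complex" where
  "qpoch sq s m = (\<Prod>l<m. sq ^ l * s - inverse (sq ^ l * s))"

definition Xfun :: "('n::finite \<Rightarrow> nat) \<Rightarrow> ('n \<Rightarrow> complex) \<Rightarrow> ('n \<Rightarrow> complex)
    \<Rightarrow> complex \<Rightarrow> complex \<Rightarrow> complex" where
  "Xfun k su sv st sq =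
     (\<Prod>i\<in>UNIV. qpoch sq (sq * st) (k i) / qpoch sq sq (k i)) *
     (\<Prod>(i,j)\<in>{(i,j). i \<noteq> j}.
        qpoch sq (inverse st * inverse sq ^ k j * su i / su j) (k i) /
        qpoch sq (inverse sq ^ k j * su i / su j) (k i)) *
     (\<Prod>(a,j)\<in>UNIV.
        qpoch sq (st * su j / sv a) (k j) / qpoch sq (su j / sv a) (k j))"

definition Yfun :: "('n::finite \<Rightarrow> nat) \<Rightarrow> ('n \<Rightarrow> complex) \<Rightarrow> ('n \<Rightarrow> complex)
    \<Rightarrow> complex \<Rightarrow> complex \<Rightarrow> complex" where
  "Yfun k su sv st sq =
     (\<Prod>a\<in>UNIV. qpoch sq (sq * st) (k a) / qpoch sq sq (k a)) *
     (\<Prod>(a,b)\<in>{(a,b). a \<noteq> b}.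
        qpoch sq (inverse st * inverse sq ^ k a * sv a / sv b) (k b) /
        qpoch sq (inverse sq ^ k a * sv a / sv b) (k b)) *
     (\<Prod>(a,j)\<in>UNIV.
        qpoch sq (st * su j / sv a) (k a) / qpoch sq (su j / sv a) (k a))"

definition sqrt_branch :: "complex \<Rightarrow> complex \<Rightarrow> complex" where
  "sqrt_branch s0 w = s0 * csqrt (w / s0 ^ 2)"

text \<open>The index sets I_p, II_p and the map (k1,k2,...) |-> (k2-p, k1+p, ...),
  where positions 1,2 are the distinct indices i1, i2.\<close>
definition Iset :: "'n \<Rightarrow> 'n \<Rightarrow> nat \<Rightarrow> int \<Rightarrow> ('n::finite \<Rightarrow> nat) set" where
  "Iset i1 i2 K p = {k. sum k UNIV = K \<and> int (k i1) \<ge> int (k i2) + 1 - p \<and> int (k i2) \<ge> p}"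

definition IIset :: "'n \<Rightarrow> 'n \<Rightarrow> nat \<Rightarrow> int \<Rightarrow> ('n::finite \<Rightarrow> nat) set" where
  "IIset i1 i2 K p = {k. sum k UNIV = K \<and> int (k i1) \<ge> - p \<and> int (k i2) \<ge> int (k i1) + 1 + p}"

definition swapmap :: "'n \<Rightarrow> 'n \<Rightarrow> int \<Rightarrow> ('n \<Rightarrow> nat) \<Rightarrow> ('n \<Rightarrow> nat)" where
  "swapmap i1 i2 p k = k(i1 := nat (int (k i2) - p), i2 := nat (int (k i1) + p))"

end

theory Submission
  imports Defs
begin

text \<open>
  Write \<open>X\<^sub>k = N\<^sub>k / D\<^sub>k\<close> with \<open>N\<^sub>k\<close>, \<open>D\<^sub>k\<close> products of brackets
  [q^m z] = (q^m z)^(1/2) - (q^m z)^(-1/2). For k in I_p the only factor of \<open>D\<^sub>k\<close> that vanishes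
  at u_1 = u_2 q^p is the bracket [q^(-p) u_1/u_2] inside [q^(-k_2) u_1/u_2; q]_(k_1); for
  k' = phi_p(k) it is [q^p u_2/u_1] = -[q^(-p) u_1/u_2] inside [q^(-k'_1) u_2/u_1; q]_(k'_2).
  Both poles are therefore simple, with vanishing factors of opposite sign, and the residues cancel
  once we know that at u_1 = u_2 q^p the numerators agree and so do the denominators with the
  vanishing bracket removed. Each of these equalities compares two products of brackets [q^m z]
  over integer intervals of exponents m; after using [q^(-m) z^(-1)] = -[q^m z] to bring all
  intervals to one side of zero, it is an equality of multisets of intervals.

  \<open>Y\<^sub>k\<close> is \<open>X\<^sub>k\<close> in the variables (v^(-1), u^(-1)), which turns the Y statement into the X
  statement for the pair (i_2, i_1) and -p. The generic parameters are those of an open dense set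
  on which no bracket occurring in the denominators vanishes.
\<close>

section \<open>The involution on index sets\<close>

lemma sum_UNIV_split_pair:
  fixes f :: "'n::finite \<Rightarrow> 'a::comm_monoid_add"
  assumes "i \<noteq> j"
  shows "sum f UNIV = f i + f j + sum f (UNIV - {i, j})"
proof -
  have "UNIV = insert i (insert j (UNIV - {i, j}))" by auto
  then have "sum f UNIV = sum f (insert i (insert j (UNIV - {i, j})))" by simp
  also have "\<dots> = f i + f j + sum f (UNIV - {i, j})" using assms by (simp add: add.assoc)
  finally show ?thesis .
qed

lemma swapmap_apply:
  assumes "i1 \<noteq> i2"
  shows "swapmap i1 i2 p k i1 = nat (int (k i2) - p)"
    and "swapmap i1 i2 p k i2 = nat (int (k i1) + p)"
    and "m \<notin> {i1, i2} \<Longrightarrow> swapmap i1 i2 p k m = k m"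
  using assms by (auto simp: swapmap_def)

lemma swapmap_commute: "i1 \<noteq> i2 \<Longrightarrow> swapmap i2 i1 (- p) = swapmap i1 i2 p"
  by (auto simp: swapmap_def fun_eq_iff)

lemma IIset_eq_Iset: "IIset i1 i2 K p = Iset i2 i1 K (- p)"
  by (auto simp: IIset_def Iset_def)

lemma Iset_le: "k \<in> Iset i1 i2 K p \<Longrightarrow> k i \<le> K"
  unfolding Iset_def using member_le_sum[of i UNIV k] by auto

lemma swapmap_Iset:
  assumes "i1 \<noteq> i2" "k \<in> Iset i1 i2 K p"
  shows "swapmap i1 i2 p k \<in> IIset i1 i2 K p"
    and "swapmap i1 i2 p (swapmap i1 i2 p k) = k"
proof -
  let ?k = "swapmap i1 i2 p k"
  have k: "sum k UNIV = K" "int (k i1) \<ge> int (k i2) + 1 - p" "int (k i2) \<ge> p"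
    using assms(2) by (auto simp: Iset_def)
  have "sum ?k (UNIV - {i1, i2}) = sum k (UNIV - {i1, i2})"
    by (rule sum.cong) (auto simp: swapmap_def)
  then have "sum ?k UNIV = K"
    using k sum_UNIV_split_pair[OF assms(1), of ?k] sum_UNIV_split_pair[OF assms(1), of k]
      swapmap_apply(1,2)[OF assms(1), of p k] by linarith
  then show "?k \<in> IIset i1 i2 K p"
    using k by (auto simp: IIset_def swapmap_apply[OF assms(1)])
  show "swapmap i1 i2 p ?k = k"
    using k assms(1) by (auto simp: swapmap_def fun_eq_iff)
qed

lemma swapmap_IIset:
  assumes "i1 \<noteq> i2" "k \<in> IIset i1 i2 K p"
  shows "swapmap i1 i2 p k \<in> Iset i1 i2 K p"
    and "swapmap i1 i2 p (swapmap i1 i2 p k) = k"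
  using swapmap_Iset[of i2 i1 k K "- p"] assms
  by (simp_all add: IIset_eq_Iset swapmap_commute)

lemma bij_betw_swapmap:
  assumes "i1 \<noteq> i2"
  shows "bij_betw (swapmap i1 i2 p) (Iset i1 i2 K p) (IIset i1 i2 K p)"
    and "bij_betw (swapmap i1 i2 p) (IIset i1 i2 K p) (Iset i1 i2 K p)"
  using swapmap_Iset[OF assms] swapmap_IIset[OF assms]
  by (auto intro!: bij_betw_byWitness[where f' = "swapmap i1 i2 p"])

section \<open>Symmetric q-Pochhammer symbols as products of brackets\<close>

text \<open>With Q = q^(1/2) and \<open>\<beta>\<close> = z^(1/2), \<open>qbracket Q \<beta> m\<close> is the bracket [q^m z].\<close>
definition qbracket :: "complex \<Rightarrow> complex \<Rightarrow> int \<Rightarrow> complex" where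
  "qbracket Q \<beta> m = Q powi m * \<beta> - inverse (Q powi m * \<beta>)"

definition qpoch_omit :: "complex \<Rightarrow> complex \<Rightarrow> nat \<Rightarrow> nat \<Rightarrow> complex" where
  "qpoch_omit Q s n l0 = (\<Prod>l\<in>{..<n} - {l0}. Q ^ l * s - inverse (Q ^ l * s))"

lemma qpoch_split_factor:
  "l0 < n \<Longrightarrow> qpoch Q s n = (Q ^ l0 * s - inverse (Q ^ l0 * s)) * qpoch_omit Q s n l0"
  unfolding qpoch_def qpoch_omit_def by (subst prod.remove[of _ l0]) auto

lemma qpoch_omit_eq_prod_qbracket:
  assumes "Q \<noteq> 0"
  shows "qpoch_omit Q (Q powi c * \<beta>) n l0 = prod (qbracket Q \<beta>) ({c..<c + int n} - {c + int l0})"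
proof -
  have "qpoch_omit Q (Q powi c * \<beta>) n l0 = (\<Prod>l\<in>{..<n} - {l0}. qbracket Q \<beta> (c + int l))"
    unfolding qpoch_omit_def qbracket_def
    by (rule prod.cong) (auto simp: power_int_add assms mult.assoc mult.commute)
  also have "\<dots> = prod (qbracket Q \<beta>) ({c..<c + int n} - {c + int l0})"
    by (rule prod.reindex_bij_witness[where i = "\<lambda>m. nat (m - c)" and j = "\<lambda>l. c + int l"]) auto
  finally show ?thesis .
qed

lemma qpoch_eq_prod_qbracket:
  assumes "Q \<noteq> 0"
  shows "qpoch Q (Q powi c * \<beta>) n = prod (qbracket Q \<beta>) {c..<c + int n}"
  using qpoch_omit_eq_prod_qbracket[OF assms, of c \<beta> n n]
  by (simp add: qpoch_def qpoch_omit_def)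

lemma qbracket_uminus: "qbracket Q \<beta> (- m) = - qbracket Q (inverse \<beta>) m"
  unfolding qbracket_def by (simp add: power_int_minus)

lemma prod_atLeastLessThan_reflect:
  fixes h :: "int \<Rightarrow> 'a::comm_ring_1"
  assumes odd: "\<And>m. h (- m) = - h m" and "a \<le> b"
  shows "prod h {a..<b} = (-1) ^ nat (b - a) * prod h {1 - b..<1 - a}"
proof -
  have "prod h {a..<b} = (\<Prod>m\<in>{1 - b..<1 - a}. - h m)"
    by (rule prod.reindex_bij_witness[where i = uminus and j = uminus]) (auto simp: odd)
  also have "\<dots> = (\<Prod>m\<in>{1 - b..<1 - a}. -1) * prod h {1 - b..<1 - a}"
    by (subst prod.distrib[symmetric]) simp
  finally show ?thesis by simp
qed

lemma prod_list_prod_cong_mset: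
  fixes h :: "'a \<Rightarrow> 'b::comm_monoid_mult"
  assumes "(\<Sum>A\<leftarrow>As. mset_set A) = (\<Sum>B\<leftarrow>Bs. mset_set B)"
  shows "(\<Prod>A\<leftarrow>As. prod h A) = (\<Prod>B\<leftarrow>Bs. prod h B)"
proof -
  have "(\<Prod>A\<leftarrow>Cs. prod h A) = prod_mset (image_mset h (\<Sum>A\<leftarrow>Cs. mset_set A))" for Cs
    by (induction Cs) (auto simp: prod_unfold_prod_mset)
  then show ?thesis using assms by simp
qed

lemma qpoch_pair_swap:
  assumes "Q \<noteq> 0" "int a' = int b - p" "int b' = int a + p"
  shows "qpoch Q (Q powi p * \<beta>) a * qpoch Q \<beta> b = qpoch Q (Q powi p * \<beta>) a' * qpoch Q \<beta> b'"
proof -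
  have "mset_set {p..<p + int a} + mset_set {0..<0 + int b}
      = mset_set {p..<p + int a'} + mset_set {0..<0 + int b'}"
    by (rule multiset_eqI) (use assms in \<open>simp add: count_mset_set'\<close>)
  then show ?thesis
    using prod_list_prod_cong_mset[of "[{p..<p + int a}, {0..<0 + int b}]"
        "[{p..<p + int a'}, {0..<0 + int b'}]" "qbracket Q \<beta>"]
    using qpoch_eq_prod_qbracket[OF assms(1), of _ \<beta>] qpoch_eq_prod_qbracket[OF assms(1), of 0 \<beta>]
    by simp
qed

lemma qpoch_Q_times:
  assumes "Q \<noteq> 0"
  shows "qpoch Q (Q * T) n = (-1) ^ n * prod (qbracket Q (inverse T)) {- int n..<0}"
proof -
  have "qpoch Q (Q * T) n = prod (qbracket Q T) {1..<1 + int n}"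
    using qpoch_eq_prod_qbracket[OF assms, of 1 T n] by simp
  also have "\<dots> = (\<Prod>m\<in>{- int n..<0}. - qbracket Q (inverse T) m)"
    by (rule prod.reindex_bij_witness[where i = uminus and j = uminus]) (auto simp: qbracket_uminus)
  also have "\<dots> = (\<Prod>m\<in>{- int n..<0}. -1) * prod (qbracket Q (inverse T)) {- int n..<0}"
    by (subst prod.distrib[symmetric]) simp
  finally show ?thesis by simp
qed

text \<open>The factors of the numerator of \<open>X\<^sub>k\<close> at u_1 = u_2 q^p that involve only a = k_1, b = k_2
  (with T = t^(1/2)); the swap is \<open>(a, b) \<mapsto> (b - p, a + p)\<close>.\<close>
lemma qpoch_numerator_pair_swap:
  assumes Q: "Q \<noteq> 0" and a': "int a' = int b - p" and b': "int b' = int a + p"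
  shows "qpoch Q (Q * T) a * qpoch Q (Q * T) b
           * qpoch Q (Q powi (p - int b) * inverse T) a * qpoch Q (Q powi (- int a - p) * inverse T) b
       = qpoch Q (Q * T) a' * qpoch Q (Q * T) b'
           * qpoch Q (Q powi (p - int b') * inverse T) a' * qpoch Q (Q powi (- int a' - p) * inverse T) b'"
    (is "?L = ?R")
proof -
  define g where "g = qbracket Q (inverse T)"
  note unfold = qpoch_Q_times[OF Q] qpoch_eq_prod_qbracket[OF Q] g_def[symmetric]
  let ?I = "[{- int a..<0}, {- int b..<0}, {p - int b..<p - int b + int a},
      {- int a - p..<- int a - p + int b}]"
  let ?J = "[{- int a'..<0}, {- int b'..<0}, {p - int b'..<p - int b' + int a'},
      {- int a' - p..<- int a' - p + int b'}]"
  have "a + b = a' + b'"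
    using a' b' by linarith
  then have signs: "(-1::complex) ^ a * (-1) ^ b = (-1) ^ a' * (-1) ^ b'"
    by (metis power_add)
  have intervals: "(\<Sum>A\<leftarrow>?I. mset_set A) = (\<Sum>A\<leftarrow>?J. mset_set A)"
    by (simp, rule multiset_eqI) (use a' b' in \<open>simp add: count_mset_set'\<close>)
  have "?L = ((-1) ^ a * (-1) ^ b) * (\<Prod>A\<leftarrow>?I. prod g A)"
    unfolding unfold by (simp add: ac_simps)
  also have "\<dots> = ((-1) ^ a' * (-1) ^ b') * (\<Prod>A\<leftarrow>?J. prod g A)"
    unfolding signs prod_list_prod_cong_mset[OF intervals] ..
  also have "\<dots> = ?R"
    unfolding unfold by (simp add: ac_simps)
  finally show ?thesis .
qed

lemma prod_atLeastLessThan_remove_zero: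
  fixes h :: "int \<Rightarrow> 'a::comm_ring_1"
  assumes odd: "\<And>m. h (- m) = - h m" and "c \<le> 0" "0 < d"
  shows "prod h ({c..<d} - {0}) = (-1) ^ nat (- c) * prod h {1..<1 - c} * prod h {1..<d}"
proof -
  have "{c..<d} - {0} = {c..<0} \<union> {1..<d}"
    using assms by auto
  then have "prod h ({c..<d} - {0}) = prod h {c..<0} * prod h {1..<d}"
    by (simp add: prod.union_disjoint)
  then show ?thesis
    using prod_atLeastLessThan_reflect[where h = h, OF odd \<open>c \<le> 0\<close>] by simp
qed

text \<open>The same for the denominator, from which the vanishing bracket m = 0 has been removed.\<close>
lemma qpoch_denominator_pair_swap:
  assumes Q: "Q \<noteq> 0" and a': "int a' = int b - p" and b': "int b' = int a + p" and "b < b'"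
  shows "qpoch Q Q a * qpoch Q Q b
           * qpoch_omit Q (Q powi (p - int b)) a a' * qpoch Q (Q powi (- int a - p)) b
       = qpoch Q Q a' * qpoch Q Q b'
           * qpoch Q (Q powi (p - int b')) a' * qpoch_omit Q (Q powi (- int a' - p)) b' b"
    (is "?L = ?R")
proof -
  define g where "g = qbracket Q 1"
  have odd: "g (- m) = - g m" for m
    unfolding g_def qbracket_uminus by simp
  have qpoch_Q: "qpoch Q Q n = prod g {1..<1 + int n}" for n
    using qpoch_eq_prod_qbracket[OF Q, of 1 1 n] by (simp add: g_def)
  have shift: "qpoch Q (Q powi c) n = prod g {c..<c + int n}" for c n
    using qpoch_eq_prod_qbracket[OF Q, of c 1 n] by (simp add: g_def)
  have omit: "qpoch_omit Q (Q powi c) n l = prod g ({c..<c + int n} - {c + int l})" for c n l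
    using qpoch_omit_eq_prod_qbracket[OF Q, of c 1 n l] by (simp add: g_def)
  have "nat (int b - p) = a'"
    using a' by simp
  then have L1: "qpoch_omit Q (Q powi (p - int b)) a a'
      = (-1) ^ a' * prod g {1..<1 + int b - p} * prod g {1..<p - int b + int a}"
    using omit[of "p - int b" a a'] a' b' \<open>b < b'\<close>
      prod_atLeastLessThan_remove_zero[where h = g, OF odd, of "p - int b" "p - int b + int a"]
    by (simp add: algebra_simps)
  have L2: "qpoch Q (Q powi (- int a - p)) b = (-1) ^ b * prod g {1 + int a + p - int b..<1 + int a + p}"
    using shift[of "- int a - p" b]
      prod_atLeastLessThan_reflect[where h = g, OF odd, of "- int a - p" "- int a - p + int b"]
    by (simp add: algebra_simps)
  have R1: "qpoch Q (Q powi (p - int b')) a' = (-1) ^ a' * prod g {1 + int a - int a'..<1 + int a}"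
    using shift[of "p - int b'" a'] b'
      prod_atLeastLessThan_reflect[where h = g, OF odd, of "p - int b'" "p - int b' + int a'"]
    by (simp add: algebra_simps)
  have "- int a' - p = - int b"
    using a' by simp
  then have R2: "qpoch_omit Q (Q powi (- int a' - p)) b' b
      = (-1) ^ b * prod g {1..<1 + int b} * prod g {1..<int b' - int b}"
    unfolding \<open>- int a' - p = - int b\<close> using omit[of "- int b" b' b] a' b' \<open>b < b'\<close>
      prod_atLeastLessThan_remove_zero[where h = g, OF odd, of "- int b" "int b' - int b"]
    by (simp add: algebra_simps)
  let ?I = "[{1..<1 + int a}, {1..<1 + int b}, {1..<1 + int b - p}, {1..<p - int b + int a},
      {1 + int a + p - int b..<1 + int a + p}]"
  let ?J = "[{1..<1 + int a'}, {1..<1 + int b'}, {1 + int a - int a'..<1 + int a}, {1..<1 + int b},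
      {1..<int b' - int b}]"
  have intervals: "(\<Sum>A\<leftarrow>?I. mset_set A) = (\<Sum>A\<leftarrow>?J. mset_set A)"
    by (simp, rule multiset_eqI) (use a' b' \<open>b < b'\<close> in \<open>simp add: count_mset_set'\<close>)
  have "?L = ((-1) ^ a' * (-1) ^ b) * (\<Prod>A\<leftarrow>?I. prod g A)"
    unfolding L1 L2 qpoch_Q by (simp add: ac_simps)
  also have "\<dots> = ((-1) ^ a' * (-1) ^ b) * (\<Prod>A\<leftarrow>?J. prod g A)"
    unfolding prod_list_prod_cong_mset[OF intervals] ..
  also have "\<dots> = ?R"
    unfolding R1 R2 qpoch_Q by (simp add: ac_simps)
  finally show ?thesis .
qed

section \<open>Factorisation of \<open>X\<close>\<close>

definition Xdiag :: "('n \<Rightarrow> nat) \<Rightarrow> complex \<Rightarrow> complex \<Rightarrow> 'n \<Rightarrow> complex" where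
  "Xdiag k \<sigma> Q i = qpoch Q (Q * \<sigma>) (k i)"

definition Xpair :: "('n \<Rightarrow> nat) \<Rightarrow> ('n \<Rightarrow> complex) \<Rightarrow> complex \<Rightarrow> complex \<Rightarrow> 'n \<Rightarrow> 'n \<Rightarrow> complex" where
  "Xpair k su \<tau> Q i j = qpoch Q (\<tau> * inverse Q ^ k j * su i / su j) (k i)"

definition Xcross :: "('n \<Rightarrow> nat) \<Rightarrow> ('n \<Rightarrow> complex) \<Rightarrow> ('n \<Rightarrow> complex) \<Rightarrow> complex \<Rightarrow> complex
    \<Rightarrow> 'n \<Rightarrow> 'n \<Rightarrow> complex" where
  "Xcross k su sv \<sigma> Q a j = qpoch Q (\<sigma> * su j / sv a) (k j)"

definition Xprod :: "('n::finite \<Rightarrow> nat) \<Rightarrow> ('n \<Rightarrow> complex) \<Rightarrow> ('n \<Rightarrow> complex) \<Rightarrow> complex \<Rightarrow> complex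
    \<Rightarrow> complex \<Rightarrow> complex" where
  "Xprod k su sv \<tau> \<sigma> Q = (\<Prod>i\<in>UNIV. Xdiag k \<sigma> Q i) * (\<Prod>(i, j)\<in>{(i, j). i \<noteq> j}. Xpair k su \<tau> Q i j)
     * (\<Prod>(a, j)\<in>UNIV. Xcross k su sv \<sigma> Q a j)"

lemma Xfun_eq_Xprod: "Xfun k su sv st sq = Xprod k su sv (inverse st) st sq / Xprod k su sv 1 1 sq"
proof -
  have "(\<Prod>(i, j)\<in>S. f i j / g i j) = (\<Prod>(i, j)\<in>S. f i j) / (\<Prod>(i, j)\<in>S. g i j)"
    for S and f g :: "'a \<Rightarrow> 'a \<Rightarrow> complex"
    by (simp add: case_prod_unfold prod_dividef)
  then show ?thesis
    unfolding Xfun_def Xprod_def Xdiag_def Xpair_def Xcross_def by (simp add: prod_dividef)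
qed

definition Xrest :: "'n \<Rightarrow> 'n \<Rightarrow> ('n::finite \<Rightarrow> nat) \<Rightarrow> ('n \<Rightarrow> complex) \<Rightarrow> ('n \<Rightarrow> complex)
    \<Rightarrow> complex \<Rightarrow> complex \<Rightarrow> complex \<Rightarrow> complex" where
  "Xrest i1 i2 k su sv \<tau> \<sigma> Q =
     (\<Prod>i\<in>UNIV - {i1, i2}. Xdiag k \<sigma> Q i)
   * (\<Prod>m\<in>UNIV - {i1, i2}. Xpair k su \<tau> Q i1 m * Xpair k su \<tau> Q m i1 * Xpair k su \<tau> Q i2 m * Xpair k su \<tau> Q m i2)
   * (\<Prod>i\<in>UNIV - {i1, i2}. \<Prod>j\<in>UNIV - {i1, i2} - {i}. Xpair k su \<tau> Q i j)
   * (\<Prod>a\<in>UNIV. Xcross k su sv \<sigma> Q a i1 * Xcross k su sv \<sigma> Q a i2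
        * (\<Prod>j\<in>UNIV - {i1, i2}. Xcross k su sv \<sigma> Q a j))"

lemma prod_UNIV_split_pair:
  fixes f :: "'n::finite \<Rightarrow> 'a::comm_monoid_mult"
  assumes "i \<noteq> j"
  shows "prod f UNIV = f i * f j * prod f (UNIV - {i, j})"
proof -
  have "UNIV = insert i (insert j (UNIV - {i, j}))" by auto
  then have "prod f UNIV = prod f (insert i (insert j (UNIV - {i, j})))" by simp
  also have "\<dots> = f i * f j * prod f (UNIV - {i, j})" using assms by (simp add: mult.assoc)
  finally show ?thesis .
qed

lemma prod_offdiag_split_pair:
  fixes F :: "'n::finite \<Rightarrow> 'n \<Rightarrow> 'a::comm_monoid_mult"
  assumes "i1 \<noteq> i2"
  shows "(\<Prod>(i, j)\<in>{(i, j). i \<noteq> j}. F i j) = F i1 i2 * F i2 i1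
     * (\<Prod>m\<in>UNIV - {i1, i2}. F i1 m * F m i1 * F i2 m * F m i2)
     * (\<Prod>i\<in>UNIV - {i1, i2}. \<Prod>j\<in>UNIV - {i1, i2} - {i}. F i j)"
proof -
  let ?R = "UNIV - {i1, i2}"
  have offdiag: "{(i, j). i \<noteq> j} = Sigma UNIV (\<lambda>i. UNIV - {i})"
    by auto
  have "(\<Prod>(i, j)\<in>{(i, j). i \<noteq> j}. F i j) = (\<Prod>i\<in>UNIV. \<Prod>j\<in>UNIV - {i}. F i j)"
    unfolding offdiag by (subst prod.Sigma) auto
  also have "\<dots> = (\<Prod>j\<in>UNIV - {i1}. F i1 j) * (\<Prod>j\<in>UNIV - {i2}. F i2 j)
      * (\<Prod>i\<in>?R. \<Prod>j\<in>UNIV - {i}. F i j)"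
    by (rule prod_UNIV_split_pair[OF assms])
  also have "UNIV - {i1} = insert i2 ?R"
    using assms by auto
  also have "UNIV - {i2} = insert i1 ?R"
    using assms by auto
  also have "(\<Prod>i\<in>?R. \<Prod>j\<in>UNIV - {i}. F i j) = (\<Prod>i\<in>?R. F i i1 * F i i2 * (\<Prod>j\<in>?R - {i}. F i j))"
  proof (rule prod.cong[OF refl])
    fix i assume "i \<in> ?R"
    then have "UNIV - {i} = insert i1 (insert i2 (?R - {i}))"
      by auto
    then show "(\<Prod>j\<in>UNIV - {i}. F i j) = F i i1 * F i i2 * (\<Prod>j\<in>?R - {i}. F i j)"
      using \<open>i \<in> ?R\<close> assms by (simp add: mult.assoc)
  qed
  finally show ?thesis
    by (simp add: prod.distrib ac_simps)
qed

lemma Xprod_split_pair: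
  assumes "i1 \<noteq> i2"
  shows "Xprod k su sv \<tau> \<sigma> Q
     = Xdiag k \<sigma> Q i1 * Xdiag k \<sigma> Q i2 * Xpair k su \<tau> Q i1 i2 * Xpair k su \<tau> Q i2 i1
       * Xrest i1 i2 k su sv \<tau> \<sigma> Q"
proof -
  have "(\<Prod>(a, j)\<in>UNIV. Xcross k su sv \<sigma> Q a j) = (\<Prod>a\<in>UNIV. \<Prod>j\<in>UNIV. Xcross k su sv \<sigma> Q a j)"
    by (simp add: prod.cartesian_product UNIV_Times_UNIV[symmetric] del: UNIV_Times_UNIV)
  also have "\<dots> = (\<Prod>a\<in>UNIV. Xcross k su sv \<sigma> Q a i1 * Xcross k su sv \<sigma> Q a i2
      * (\<Prod>j\<in>UNIV - {i1, i2}. Xcross k su sv \<sigma> Q a j))"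
    by (intro prod.cong refl prod_UNIV_split_pair[OF assms])
  finally show ?thesis
    unfolding Xprod_def Xrest_def prod_offdiag_split_pair[OF assms]
      prod_UNIV_split_pair[OF assms, of "Xdiag k \<sigma> Q"]
    by (simp add: ac_simps)
qed

lemma power_mult_power_int_eq:
  "(Q::complex) \<noteq> 0 \<Longrightarrow> int n + c = int m \<Longrightarrow> Q ^ n * Q powi c = Q ^ m"
  by (metis power_int_add power_int_of_nat)

definition Xden_omit :: "'n \<Rightarrow> 'n \<Rightarrow> nat \<Rightarrow> ('n::finite \<Rightarrow> nat) \<Rightarrow> ('n \<Rightarrow> complex) \<Rightarrow> ('n \<Rightarrow> complex)
    \<Rightarrow> complex \<Rightarrow> complex" where
  "Xden_omit i1 i2 l0 k su sv Q = Xdiag k 1 Q i1 * Xdiag k 1 Q i2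
     * qpoch_omit Q (inverse Q ^ k i2 * su i1 / su i2) (k i1) l0 * Xpair k su 1 Q i2 i1
     * Xrest i1 i2 k su sv 1 1 Q"

lemma Xprod_split_factor:
  fixes Q :: complex and su :: "'n::finite \<Rightarrow> complex"
  assumes "i1 \<noteq> i2" "l < k i1"
  defines "z \<equiv> Q ^ l * inverse Q ^ k i2 * su i1 / su i2"
  shows "Xprod k su sv 1 1 Q = (z - inverse z) * Xden_omit i1 i2 l k su sv Q"
  using qpoch_split_factor[OF assms(2), of Q "inverse Q ^ k i2 * su i1 / su i2"]
  unfolding Xprod_split_pair[OF assms(1)] Xden_omit_def z_def
  by (simp add: Xpair_def ac_simps)

lemma Xrest_commute: "Xrest i2 i1 k su sv \<tau> \<sigma> Q = Xrest i1 i2 k su sv \<tau> \<sigma> Q"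
  unfolding Xrest_def by (simp add: insert_commute ac_simps)

context
  fixes i1 i2 :: "'n::finite" and k k' :: "'n \<Rightarrow> nat" and p :: int and Q :: complex and su :: "'n \<Rightarrow> complex"
  defines "k' \<equiv> swapmap i1 i2 p k"
  assumes distinct: "i1 \<noteq> i2" and Q: "Q \<noteq> 0"
    and k_lower: "p \<le> int (k i2)" "- p \<le> int (k i1)"
    and su_pole: "su i1 = su i2 * Q powi p"
begin

private lemma swapped_values:
  "int (k' i1) = int (k i2) - p" "int (k' i2) = int (k i1) + p" "m \<notin> {i1, i2} \<Longrightarrow> k' m = k m"
  using swapmap_apply[OF distinct, where p = p and k = k] k_lower by (auto simp: k'_def)

lemma Xpair_mixed_swap:
  assumes "m \<notin> {i1, i2}"
  shows "Xpair k su \<tau> Q i1 m * Xpair k su \<tau> Q m i1 * Xpair k su \<tau> Q i2 m * Xpair k su \<tau> Q m i2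
       = Xpair k' su \<tau> Q i1 m * Xpair k' su \<tau> Q m i1 * Xpair k' su \<tau> Q i2 m * Xpair k' su \<tau> Q m i2"
proof -
  define \<beta> where "\<beta> = \<tau> * inverse Q ^ k m * su i2 / su m"
  have out: "Xpair k su \<tau> Q i1 m * Xpair k su \<tau> Q i2 m = Xpair k' su \<tau> Q i1 m * Xpair k' su \<tau> Q i2 m"
    using qpoch_pair_swap[OF Q swapped_values(1,2), of \<beta>] swapped_values(3)[OF assms]
    by (simp add: Xpair_def su_pole \<beta>_def ac_simps)
  have "Q ^ k i1 * Q powi p = Q ^ k' i2" "Q ^ k' i1 * Q powi p = Q ^ k i2"
    using swapped_values by (simp_all add: power_mult_power_int_eq Q)
  then have "inverse Q ^ k i1 * inverse (Q powi p) = inverse Q ^ k' i2"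
    and "inverse Q ^ k' i1 * inverse (Q powi p) = inverse Q ^ k i2"
    by (simp_all add: power_inverse flip: inverse_mult_distrib)
  then have "Xpair k su \<tau> Q m i1 = Xpair k' su \<tau> Q m i2" "Xpair k' su \<tau> Q m i1 = Xpair k su \<tau> Q m i2"
    using swapped_values(3)[OF assms]
    by (simp_all add: Xpair_def su_pole divide_inverse ac_simps)
  then show ?thesis
    using out by (simp add: ac_simps)
qed

lemma Xcross_pair_swap:
  "Xcross k su sv \<sigma> Q a i1 * Xcross k su sv \<sigma> Q a i2 = Xcross k' su sv \<sigma> Q a i1 * Xcross k' su sv \<sigma> Q a i2"
  using qpoch_pair_swap[OF Q swapped_values(1,2), of "\<sigma> * su i2 / sv a"]
  by (simp add: Xcross_def su_pole ac_simps)

lemma Xrest_swap: "Xrest i1 i2 k su sv \<tau> \<sigma> Q = Xrest i1 i2 k' su sv \<tau> \<sigma> Q"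
proof -
  let ?R = "UNIV - {i1, i2}"
  have diag: "(\<Prod>i\<in>?R. Xdiag k \<sigma> Q i) = (\<Prod>i\<in>?R. Xdiag k' \<sigma> Q i)"
    by (rule prod.cong) (auto simp: Xdiag_def swapped_values(3))
  have mixed: "(\<Prod>m\<in>?R. Xpair k su \<tau> Q i1 m * Xpair k su \<tau> Q m i1 * Xpair k su \<tau> Q i2 m * Xpair k su \<tau> Q m i2)
      = (\<Prod>m\<in>?R. Xpair k' su \<tau> Q i1 m * Xpair k' su \<tau> Q m i1 * Xpair k' su \<tau> Q i2 m * Xpair k' su \<tau> Q m i2)"
    by (rule prod.cong) (auto intro: Xpair_mixed_swap)
  have others: "(\<Prod>i\<in>?R. \<Prod>j\<in>?R - {i}. Xpair k su \<tau> Q i j) = (\<Prod>i\<in>?R. \<Prod>j\<in>?R - {i}. Xpair k' su \<tau> Q i j)"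
    by (intro prod.cong refl) (auto simp: Xpair_def swapped_values(3))
  have cross: "Xcross k su sv \<sigma> Q a i1 * Xcross k su sv \<sigma> Q a i2 * (\<Prod>j\<in>?R. Xcross k su sv \<sigma> Q a j)
      = Xcross k' su sv \<sigma> Q a i1 * Xcross k' su sv \<sigma> Q a i2 * (\<Prod>j\<in>?R. Xcross k' su sv \<sigma> Q a j)" for a
    using Xcross_pair_swap by (auto simp: Xcross_def swapped_values(3) intro!: arg_cong2[where f = "(*)"] prod.cong)
  show ?thesis
    unfolding Xrest_def diag mixed others cross ..
qed

lemma pole_ratios:
  assumes "su i2 \<noteq> 0"
  shows "\<tau> * inverse Q ^ n * su i1 / su i2 = Q powi (p - int n) * \<tau>"
    and "\<tau> * inverse Q ^ n * su i2 / su i1 = Q powi (- int n - p) * \<tau>"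
  using assms Q by (simp_all add: su_pole power_int_diff power_int_minus power_inverse field_simps)

lemma Xprod_numerator_swap:
  assumes "su i2 \<noteq> 0"
  shows "Xprod k su sv (inverse T) T Q = Xprod k' su sv (inverse T) T Q"
proof -
  have "Xdiag k T Q i1 * Xdiag k T Q i2 * Xpair k su (inverse T) Q i1 i2 * Xpair k su (inverse T) Q i2 i1
      = Xdiag k' T Q i1 * Xdiag k' T Q i2 * Xpair k' su (inverse T) Q i1 i2 * Xpair k' su (inverse T) Q i2 i1"
    using qpoch_numerator_pair_swap[OF Q swapped_values(1,2), of T]
    unfolding Xdiag_def Xpair_def pole_ratios[OF assms] .
  then show ?thesis
    unfolding Xprod_split_pair[OF distinct] Xrest_swap by simp
qed

lemma Xden_omit_swap:
  assumes "su i2 \<noteq> 0" "int (k i2) < int (k i1) + p"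
  shows "Xden_omit i1 i2 (k' i1) k su sv Q = Xden_omit i2 i1 (k i2) k' su sv Q"
proof -
  have "k i2 < k' i2"
    using swapped_values(2) assms(2) by linarith
  from qpoch_denominator_pair_swap[OF Q swapped_values(1,2) this]
  have "Xdiag k 1 Q i1 * Xdiag k 1 Q i2 * qpoch_omit Q (inverse Q ^ k i2 * su i1 / su i2) (k i1) (k' i1)
      * Xpair k su 1 Q i2 i1
    = Xdiag k' 1 Q i2 * Xdiag k' 1 Q i1 * qpoch_omit Q (inverse Q ^ k' i1 * su i2 / su i1) (k' i2) (k i2)
      * Xpair k' su 1 Q i1 i2"
    unfolding Xdiag_def Xpair_def mult_1_left pole_ratios[OF assms(1), of 1, simplified] by (simp add: ac_simps)
  then show ?thesis
    unfolding Xden_omit_def Xrest_commute[of i2 i1] Xrest_swap by simp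
qed

end

lemma Xfun_pole_factor:
  fixes Q x :: complex and U :: "'n::finite \<Rightarrow> complex"
  assumes "i1 \<noteq> i2" "Q \<noteq> 0" "p \<le> int (k i2)" "int (k i2) < int (k i1) + p"
  defines "k' \<equiv> swapmap i1 i2 p k" and "z \<equiv> x / (U i2 * Q powi p)"
  shows "Xfun k (U(i1 := x)) V T Q
      = Xprod k (U(i1 := x)) V (inverse T) T Q / Xden_omit i1 i2 (k' i1) k (U(i1 := x)) V Q / (z - inverse z)"
    and "Xfun k' (U(i1 := x)) V T Q
      = Xprod k' (U(i1 := x)) V (inverse T) T Q / Xden_omit i2 i1 (k i2) k' (U(i1 := x)) V Q
        / (- (z - inverse z))"
proof -
  let ?su = "U(i1 := x)"
  have k': "int (k' i1) = int (k i2) - p" "int (k' i2) = int (k i1) + p"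
    using swapmap_apply(1,2)[OF assms(1), of p k] assms(3,4) by (auto simp: k'_def)
  have su: "?su i1 = x" "?su i2 = U i2"
    using assms(1) by auto
  have pow: "Q ^ k i2 = Q ^ k' i1 * Q powi p"
    using power_mult_power_int_eq[OF assms(2), of "k' i1" p "k i2"] k' by simp
  then have z: "Q ^ k' i1 * inverse Q ^ k i2 * ?su i1 / ?su i2 = z"
    using assms(2) by (simp add: su z_def power_inverse field_simps del: fun_upd_apply)
  have "k' i1 < k i1"
    using k' assms(4) by linarith
  from Xprod_split_factor[where k = k, OF assms(1) this, where Q = Q and su = ?su and sv = V]
  show "Xfun k ?su V T Q = Xprod k ?su V (inverse T) T Q / Xden_omit i1 i2 (k' i1) k ?su V Q / (z - inverse z)"
    unfolding z by (simp add: Xfun_eq_Xprod mult.commute)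
  have "Q ^ k i2 * inverse Q ^ k' i1 = Q powi p"
    using assms(2) by (simp add: pow power_inverse)
  then have z': "Q ^ k i2 * inverse Q ^ k' i1 * ?su i2 / ?su i1 = inverse z"
    by (simp add: su z_def divide_inverse ac_simps del: fun_upd_apply)
  have "k i2 < k' i2"
    using k' assms(4) by linarith
  from Xprod_split_factor[where k = k', OF assms(1)[symmetric] this, where Q = Q and su = ?su and sv = V]
  show "Xfun k' ?su V T Q
      = Xprod k' ?su V (inverse T) T Q / Xden_omit i2 i1 (k i2) k' ?su V Q / (- (z - inverse z))"
    unfolding z' by (simp add: Xfun_eq_Xprod mult.commute)
qed

section \<open>Cancellation of the residues of \<open>X\<close>\<close>

lemma residue_divide_simple_zero:
  assumes A: "open A" "z \<in> A" and f: "f holomorphic_on A" and g: "g holomorphic_on A"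
    and g': "(g has_field_derivative g') (at z)" "g z = 0" "g' \<noteq> 0"
  shows "residue (\<lambda>w. f w / g w) z = f z / g'"
proof -
  have quotient: "((\<lambda>w. (g w - g z) / (w - z)) \<longlongrightarrow> g') (at z)"
    using g'(1) by (simp add: has_field_derivative_iff)
  have "eventually (\<lambda>w. (g w - g z) / (w - z) \<noteq> 0 \<and> w \<in> A) (at z)"
    using tendsto_imp_eventually_ne[OF quotient g'(3)] eventually_at_in_open'[OF A]
    by eventually_elim auto
  then obtain B where B: "open B" "z \<in> B" "\<And>w. w \<in> B \<Longrightarrow> w \<noteq> z \<Longrightarrow> g w \<noteq> 0 \<and> w \<in> A"
    unfolding eventually_at_topological using g'(2) by auto
  have "(\<lambda>w. f w / g w) holomorphic_on (B \<inter> A) - {z}"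
    using B(3) by (intro holomorphic_intros holomorphic_on_subset[OF f] holomorphic_on_subset[OF g]) auto
  moreover have "((\<lambda>w. f w / g w * (w - z)) \<longlongrightarrow> f z / g') (at z)"
  proof -
    have "isCont f z"
      using f A holomorphic_on_imp_continuous_on continuous_on_eq_continuous_at by blast
    then have "((\<lambda>w. f w / ((g w - g z) / (w - z))) \<longlongrightarrow> f z / g') (at z)"
      using g'(3) by (intro tendsto_intros quotient) (auto simp: isCont_def)
    moreover have "eventually (\<lambda>w. f w / ((g w - g z) / (w - z)) = f w / g w * (w - z)) (at z)"
      using g'(2) by (auto simp: eventually_at_filter)
    ultimately show ?thesis
      by (rule Lim_transform_eventually)
  qed
  ultimately show ?thesis
    using A B by (intro residue_simple'[of "B \<inter> A"]) auto
qed

lemma residue_divide_divide_simple_zero: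
  assumes A: "open A" "z \<in> A" and f: "f holomorphic_on A" and h: "h holomorphic_on A" "h z \<noteq> 0"
    and g: "g holomorphic_on A" "(g has_field_derivative g') (at z)" "g z = 0" "g' \<noteq> 0"
  shows "residue (\<lambda>w. f w / h w / g w) z = f z / h z / g'"
proof -
  define B where "B = A \<inter> h -` (- {0})"
  have B: "open B" "z \<in> B" "B \<subseteq> A"
    using A h holomorphic_on_imp_continuous_on by (auto simp: B_def intro!: continuous_open_preimage)
  have "(\<lambda>w. f w / h w) holomorphic_on B"
    using B(3) by (intro holomorphic_on_divide holomorphic_on_subset[OF f] holomorphic_on_subset[OF h(1)])
      (auto simp: B_def)
  then show ?thesis
    using B g by (intro residue_divide_simple_zero[OF B(1,2)]) (auto intro: holomorphic_on_subset)
qed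

lemma bracket_simple_zero:
  fixes x :: "complex \<Rightarrow> complex"
  assumes x: "x holomorphic_on A" "\<And>w. w \<in> A \<Longrightarrow> x w \<noteq> 0" and c: "c \<noteq> 0" "x w0 = c"
    and x': "(x has_field_derivative x') (at w0)"
  shows "(\<lambda>w. x w / c - inverse (x w / c)) holomorphic_on A"
    and "((\<lambda>w. x w / c - inverse (x w / c)) has_field_derivative 2 * (x' / c)) (at w0)"
    and "x w0 / c - inverse (x w0 / c) = 0"
proof -
  show "(\<lambda>w. x w / c - inverse (x w / c)) holomorphic_on A"
    using x c by (auto intro!: holomorphic_intros)
  have d: "((\<lambda>w. x w / c) has_field_derivative x' / c) (at w0)"
    using x' by (rule DERIV_cdivide)
  have "((\<lambda>w. x w / c - inverse (x w / c)) has_field_derivative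
      x' / c - (- (inverse (x w0 / c) * (x' / c) * inverse (x w0 / c)))) (at w0)"
    using c by (intro DERIV_diff d DERIV_inverse') simp
  then show "((\<lambda>w. x w / c - inverse (x w / c)) has_field_derivative 2 * (x' / c)) (at w0)"
    using c by simp
  show "x w0 / c - inverse (x w0 / c) = 0"
    using c by simp
qed

lemma qpoch_holomorphic:
  assumes "s holomorphic_on A" "\<And>w. w \<in> A \<Longrightarrow> s w \<noteq> 0" "Q \<noteq> 0"
  shows "(\<lambda>w. qpoch Q (s w) n) holomorphic_on A"
  unfolding qpoch_def using assms by (auto intro!: holomorphic_intros)

lemma qpoch_omit_holomorphic:
  assumes "s holomorphic_on A" "\<And>w. w \<in> A \<Longrightarrow> s w \<noteq> 0" "Q \<noteq> 0"
  shows "(\<lambda>w. qpoch_omit Q (s w) n l0) holomorphic_on A"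
  unfolding qpoch_omit_def using assms by (auto intro!: holomorphic_intros)

context
  fixes A :: "complex set" and su :: "complex \<Rightarrow> 'n::finite \<Rightarrow> complex" and sv :: "'n \<Rightarrow> complex"
    and Q :: complex
  assumes su_holomorphic: "\<And>i. (\<lambda>w. su w i) holomorphic_on A"
    and su_nonzero: "\<And>w i. w \<in> A \<Longrightarrow> su w i \<noteq> 0"
    and sv_nonzero: "\<And>a. sv a \<noteq> 0" and Q: "Q \<noteq> 0"
begin

lemma Xpair_holomorphic: "\<tau> \<noteq> 0 \<Longrightarrow> (\<lambda>w. Xpair k (su w) \<tau> Q i j) holomorphic_on A"
  unfolding Xpair_def using su_holomorphic su_nonzero Q
  by (intro qpoch_holomorphic holomorphic_intros) auto

lemma Xcross_holomorphic: "\<sigma> \<noteq> 0 \<Longrightarrow> (\<lambda>w. Xcross k (su w) sv \<sigma> Q a j) holomorphic_on A"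
  unfolding Xcross_def using su_holomorphic su_nonzero sv_nonzero Q
  by (intro qpoch_holomorphic holomorphic_intros) auto

lemma Xprod_holomorphic:
  "\<tau> \<noteq> 0 \<Longrightarrow> \<sigma> \<noteq> 0 \<Longrightarrow> (\<lambda>w. Xprod k (su w) sv \<tau> \<sigma> Q) holomorphic_on A"
  unfolding Xprod_def case_prod_unfold
  by (intro holomorphic_intros holomorphic_on_prod Xpair_holomorphic Xcross_holomorphic)

lemma Xden_omit_holomorphic: "(\<lambda>w. Xden_omit i1 i2 l0 k (su w) sv Q) holomorphic_on A"
  unfolding Xden_omit_def Xrest_def using su_holomorphic su_nonzero Q
  by (intro holomorphic_intros holomorphic_on_prod Xpair_holomorphic Xcross_holomorphic
      qpoch_omit_holomorphic) auto

end

lemma qbracket_nonzero: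
  assumes "Q \<noteq> 0" "\<beta> \<noteq> 0" "(Q powi m * \<beta>)\<^sup>2 \<noteq> 1"
  shows "qbracket Q \<beta> m \<noteq> 0"
proof
  assume "qbracket Q \<beta> m = 0"
  then have "(Q powi m * \<beta>) * (Q powi m * \<beta>) = 1"
    using assms(1,2) by (simp add: qbracket_def field_simps)
  with assms(3) show False
    by (simp add: power2_eq_square)
qed

lemma qpoch_omit_nonzero:
  assumes "Q \<noteq> 0" "\<beta> \<noteq> 0"
    and "\<And>m. c \<le> m \<Longrightarrow> m < c + int n \<Longrightarrow> m \<noteq> c + int l0 \<Longrightarrow> (Q powi m * \<beta>)\<^sup>2 \<noteq> 1"
  shows "qpoch_omit Q (Q powi c * \<beta>) n l0 \<noteq> 0"
  unfolding qpoch_omit_eq_prod_qbracket[OF assms(1)]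
  using assms(3) qbracket_nonzero[OF assms(1,2)] by (auto simp: prod_zero_iff)

lemma qpoch_nonzero:
  assumes "Q \<noteq> 0" "\<beta> \<noteq> 0" "\<And>m. c \<le> m \<Longrightarrow> m < c + int n \<Longrightarrow> (Q powi m * \<beta>)\<^sup>2 \<noteq> 1"
  shows "qpoch Q (Q powi c * \<beta>) n \<noteq> 0"
  unfolding qpoch_eq_prod_qbracket[OF assms(1)]
  using assms(3) qbracket_nonzero[OF assms(1,2)] by (auto simp: prod_zero_iff)

text \<open>Parameters avoiding the hypersurfaces \<open>q\<^sup>m = 1\<close> (\<open>m \<noteq> 0\<close>), \<open>q\<^sup>m u\<^sub>i / u\<^sub>j = 1\<close>,
  \<open>q\<^sup>m v\<^sub>i / v\<^sub>j = 1\<close> (\<open>i \<noteq> j\<close>) and \<open>q\<^sup>m u\<^sub>j / v\<^sub>a = 1\<close> for \<open>\<bar>m\<bar> \<le> M\<close>, i.e. those where the corresponding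
  brackets \<open>[q\<^sup>m z]\<close> do not vanish.\<close>
definition generic_params :: "int \<Rightarrow> (('n::finite \<Rightarrow> complex) \<times> ('n \<Rightarrow> complex) \<times> complex \<times> complex) set" where
  "generic_params M = {(su, sv, st, sq). st \<noteq> 0 \<and> sq \<noteq> 0 \<and> (\<forall>i. su i \<noteq> 0) \<and> (\<forall>a. sv a \<noteq> 0) \<and>
     (\<forall>m\<in>{-M..M} - {0}. (sq powi m)\<^sup>2 \<noteq> 1) \<and>
     (\<forall>m\<in>{-M..M}. \<forall>i. \<forall>j\<in>- {i}. (sq powi m * (su i / su j))\<^sup>2 \<noteq> 1 \<and> (sq powi m * (sv i / sv j))\<^sup>2 \<noteq> 1) \<and>
     (\<forall>m\<in>{-M..M}. \<forall>j a. (sq powi m * (su j / sv a))\<^sup>2 \<noteq> 1)}"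

lemma generic_paramsD:
  assumes "(U, V, T, Q) \<in> generic_params M"
  shows "Q \<noteq> 0" "U i \<noteq> 0" "V a \<noteq> 0" "T \<noteq> 0"
    and "m \<in> {-M..M} \<Longrightarrow> m \<noteq> 0 \<Longrightarrow> (Q powi m)\<^sup>2 \<noteq> 1"
    and "m \<in> {-M..M} \<Longrightarrow> i \<noteq> j \<Longrightarrow> (Q powi m * (U i / U j))\<^sup>2 \<noteq> 1"
    and "m \<in> {-M..M} \<Longrightarrow> (Q powi m * (U j / V a))\<^sup>2 \<noteq> 1"
  using assms by (auto simp: generic_params_def)

lemma pole_point_ratio:
  fixes Q :: complex
  assumes "Q \<noteq> 0" "U i2 \<noteq> 0" "i1 \<noteq> i2"
  shows "inverse Q ^ n * (U(i1 := U i2 * Q powi p)) i / (U(i1 := U i2 * Q powi p)) j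
       = Q powi ((if i = i1 then p else 0) - (if j = i1 then p else 0) - int n)
         * (U (if i = i1 then i2 else i) / U (if j = i1 then i2 else j))"
  using assms by (cases "i = i1"; cases "j = i1")
    (simp_all add: power_int_diff power_int_minus power_inverse field_simps)

lemma pole_point_cross_ratio:
  fixes Q :: complex
  shows "(U(i1 := U i2 * Q powi p)) j / V a
       = Q powi (if j = i1 then p else 0) * (U (if j = i1 then i2 else j) / V a)"
  by simp

context
  fixes i1 i2 :: "'n::finite" and U V :: "'n \<Rightarrow> complex" and T Q :: complex and M p :: int
    and k :: "'n \<Rightarrow> nat"
  assumes distinct: "i1 \<noteq> i2" and params: "(U, V, T, Q) \<in> generic_params M"
    and k_bound: "\<And>i. int (k i) + \<bar>p\<bar> \<le> M"
begin

private lemmas generic = generic_paramsD[OF params]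

lemma Xdiag_nonzero: "Xdiag k 1 Q i \<noteq> 0"
proof -
  have "(Q powi m * 1)\<^sup>2 \<noteq> 1" if "1 \<le> m" "m < 1 + int (k i)" for m
  proof -
    have "m \<in> {-M..M}" "m \<noteq> 0"
      using that k_bound[of i] abs_ge_zero[of p] by (simp_all, linarith)
    then show ?thesis
      using generic(5) by simp
  qed
  then have "qpoch Q (Q powi 1 * 1) (k i) \<noteq> 0"
    by (intro qpoch_nonzero generic(1)) auto
  then show ?thesis
    by (simp add: Xdiag_def)
qed

lemma Xpair_pole_nonzero:
  assumes "i \<noteq> j" "{i, j} \<noteq> {i1, i2}"
  shows "Xpair k (U(i1 := U i2 * Q powi p)) 1 Q i j \<noteq> 0"
proof -
  let ?e = "\<lambda>l. if l = i1 then p else 0" and ?\<rho> = "\<lambda>l. if l = i1 then i2 else l"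
  have ratio: "inverse Q ^ k j * (U(i1 := U i2 * Q powi p)) i / (U(i1 := U i2 * Q powi p)) j
      = Q powi (?e i - ?e j - int (k j)) * (U (?\<rho> i) / U (?\<rho> j))"
    by (rule pole_point_ratio[OF generic(1,2) distinct])
  have "?\<rho> i \<noteq> ?\<rho> j"
    using assms distinct by (auto simp: doubleton_eq_iff)
  then have "(Q powi m * (U (?\<rho> i) / U (?\<rho> j)))\<^sup>2 \<noteq> 1"
    if "?e i - ?e j - int (k j) \<le> m" "m < ?e i - ?e j - int (k j) + int (k i)" for m
    using that k_bound[of i] k_bound[of j] by (intro generic(6)) (auto split: if_splits abs_split)
  then show ?thesis
    unfolding Xpair_def mult_1_left ratio using generic(2) by (intro qpoch_nonzero generic(1)) auto
qed

lemma Xcross_pole_nonzero: "Xcross k (U(i1 := U i2 * Q powi p)) V 1 Q a j \<noteq> 0"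
proof -
  let ?e = "if j = i1 then p else 0" and ?\<rho> = "if j = i1 then i2 else j"
  have "(Q powi m * (U ?\<rho> / V a))\<^sup>2 \<noteq> 1" if "?e \<le> m" "m < ?e + int (k j)" for m
    using that k_bound[of j] by (intro generic(7)) (auto split: if_splits abs_split)
  then show ?thesis
    unfolding Xcross_def mult_1_left pole_point_cross_ratio
    using generic(2,3) by (intro qpoch_nonzero generic(1)) auto
qed

lemma Xrest_pole_nonzero: "Xrest i1 i2 k (U(i1 := U i2 * Q powi p)) V 1 1 Q \<noteq> 0"
  unfolding Xrest_def using Xdiag_nonzero Xcross_pole_nonzero Xpair_pole_nonzero
  by (auto simp: prod_zero_iff doubleton_eq_iff)

lemma Xden_omit_pole_nonzero:
  assumes "p \<le> int (k i2)" "int (k i2) < int (k i1) + p"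
  shows "Xden_omit i1 i2 (swapmap i1 i2 p k i1) k (U(i1 := U i2 * Q powi p)) V Q \<noteq> 0"
proof -
  let ?su = "U(i1 := U i2 * Q powi p)"
  have l0: "int (swapmap i1 i2 p k i1) = int (k i2) - p"
    using swapmap_apply(1)[OF distinct] assms(1) by simp
  have ratio12: "inverse Q ^ k i2 * ?su i1 / ?su i2 = Q powi (p - int (k i2)) * 1"
    using pole_point_ratio[OF generic(1,2) distinct, where n = "k i2" and i = i1 and j = i2] generic(2) distinct
    by simp
  have ratio21: "inverse Q ^ k i1 * ?su i2 / ?su i1 = Q powi (- p - int (k i1)) * 1"
    using pole_point_ratio[OF generic(1,2) distinct, where n = "k i1" and i = i2 and j = i1] generic(2) distinct
    by simp
  have "qpoch_omit Q (Q powi (p - int (k i2)) * 1) (k i1) (swapmap i1 i2 p k i1) \<noteq> 0"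
  proof (rule qpoch_omit_nonzero[OF generic(1)])
    fix m assume "p - int (k i2) \<le> m" "m < p - int (k i2) + int (k i1)"
      "m \<noteq> p - int (k i2) + int (swapmap i1 i2 p k i1)"
    then have "m \<in> {-M..M}" "m \<noteq> 0"
      using l0 k_bound[of i1] k_bound[of i2] by (auto split: abs_split)
    then show "(Q powi m * 1)\<^sup>2 \<noteq> 1"
      using generic(5) by simp
  qed simp
  moreover have "qpoch Q (Q powi (- p - int (k i1)) * 1) (k i2) \<noteq> 0"
  proof (rule qpoch_nonzero[OF generic(1)])
    fix m assume "- p - int (k i1) \<le> m" "m < - p - int (k i1) + int (k i2)"
    then have "m \<in> {-M..M}" "m \<noteq> 0"
      using assms k_bound[of i1] by (auto split: abs_split)
    then show "(Q powi m * 1)\<^sup>2 \<noteq> 1"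
      using generic(5) by simp
  qed simp
  ultimately show ?thesis
    unfolding Xden_omit_def Xpair_def mult_1_left ratio12 ratio21
    using Xdiag_nonzero Xrest_pole_nonzero by simp
qed

lemma Xfun_residues_cancel:
  assumes k: "p \<le> int (k i2)" "int (k i2) < int (k i1) + p"
    and A: "open A" "w0 \<in> A" and x: "x holomorphic_on A" "\<And>w. w \<in> A \<Longrightarrow> x w \<noteq> 0"
    and pole: "x w0 = U i2 * Q powi p" and x': "(x has_field_derivative x') (at w0)" "x' \<noteq> 0"
  shows "residue (\<lambda>w. Xfun k (U(i1 := x w)) V T Q) w0
       + residue (\<lambda>w. Xfun (swapmap i1 i2 p k) (U(i1 := x w)) V T Q) w0 = 0"
proof -
  note Q = generic(1) and U = generic(2) and V = generic(3)
  define k' where "k' = swapmap i1 i2 p k"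
  define c where "c = U i2 * Q powi p"
  define N where "N kk w = Xprod kk (U(i1 := x w)) V (inverse T) T Q" for kk w
  define E where "E w = Xden_omit i1 i2 (k' i1) k (U(i1 := x w)) V Q" for w
  define E' where "E' w = Xden_omit i2 i1 (k i2) k' (U(i1 := x w)) V Q" for w
  have "c \<noteq> 0"
    using Q U by (simp add: c_def)
  note Z = bracket_simple_zero[OF x \<open>c \<noteq> 0\<close> pole[folded c_def] x'(1)]
  have X: "Xfun k (U(i1 := x w)) V T Q = N k w / E w / (x w / c - inverse (x w / c))"
    "Xfun k' (U(i1 := x w)) V T Q = N k' w / E' w / (- (x w / c - inverse (x w / c)))" for w
    using Xfun_pole_factor[OF distinct Q k, where x = "x w" and U = U and V = V and T = T]
    by (simp_all add: N_def E_def E'_def c_def k'_def)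
  have upd_holomorphic: "(\<lambda>w. (U(i1 := x w)) i) holomorphic_on A" for i
    using x by (cases "i = i1") auto
  have upd_nonzero: "(U(i1 := x w)) i \<noteq> 0" if "w \<in> A" for w i
    using x that U by (cases "i = i1") auto
  note holomorphic = Xprod_holomorphic[where su = "\<lambda>w. U(i1 := x w)" and sv = V,
      OF upd_holomorphic upd_nonzero V Q]
    Xden_omit_holomorphic[where su = "\<lambda>w. U(i1 := x w)" and sv = V, OF upd_holomorphic upd_nonzero V Q]
  have N: "N kk holomorphic_on A" for kk
    unfolding N_def using generic(4) by (intro holomorphic(1)) auto
  have E: "E holomorphic_on A" "E' holomorphic_on A"
    unfolding E_def E'_def using holomorphic(2) by auto
  have "E w0 \<noteq> 0"
    using Xden_omit_pole_nonzero[OF k] pole by (simp add: E_def k'_def)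
  have "- p \<le> int (k i1)"
    using k by linarith
  then have "E' w0 = E w0" and "N k' w0 = N k w0"
    using Xden_omit_swap[where k = k and su = "U(i1 := U i2 * Q powi p)", OF distinct Q k(1)]
      Xprod_numerator_swap[where k = k and su = "U(i1 := U i2 * Q powi p)", OF distinct Q k(1)]
      k(2) pole U distinct
    by (simp_all add: E_def E'_def N_def k'_def)
  have "2 * (x' / c) \<noteq> 0"
    using \<open>c \<noteq> 0\<close> x'(2) by simp
  have "residue (\<lambda>w. N k w / E w / (x w / c - inverse (x w / c))) w0 = N k w0 / E w0 / (2 * (x' / c))"
    using \<open>E w0 \<noteq> 0\<close> \<open>2 * (x' / c) \<noteq> 0\<close>
    by (intro residue_divide_divide_simple_zero[OF A N E(1) _ Z])
  moreover have "residue (\<lambda>w. N k' w / E' w / (- (x w / c - inverse (x w / c)))) w0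
      = N k' w0 / E' w0 / (- (2 * (x' / c)))"
    using \<open>E w0 \<noteq> 0\<close> \<open>E' w0 = E w0\<close> Z(3) \<open>2 * (x' / c) \<noteq> 0\<close>
    by (intro residue_divide_divide_simple_zero[OF A N E(2) _ holomorphic_on_minus[OF Z(1)]
          DERIV_minus[OF Z(2)]]) auto
  ultimately show ?thesis
    unfolding k'_def[symmetric] X using \<open>E' w0 = E w0\<close> \<open>N k' w0 = N k w0\<close> by simp
qed

end

lemma sqrt_branch:
  fixes s0 :: complex
  assumes "s0 \<noteq> 0"
  shows "sqrt_branch s0 holomorphic_on ball (s0\<^sup>2) (norm (s0\<^sup>2))"
    and "\<And>w. w \<in> ball (s0\<^sup>2) (norm (s0\<^sup>2)) \<Longrightarrow> sqrt_branch s0 w \<noteq> 0"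
    and "sqrt_branch s0 (s0\<^sup>2) = s0"
    and "(sqrt_branch s0 has_field_derivative inverse (2 * s0)) (at (s0\<^sup>2))"
proof -
  have Re_pos: "0 < Re (w / s0\<^sup>2)" if "w \<in> ball (s0\<^sup>2) (norm (s0\<^sup>2))" for w
  proof -
    have "w / s0\<^sup>2 - 1 = (w - s0\<^sup>2) / s0\<^sup>2"
      using assms by (simp add: diff_divide_distrib)
    then have "norm (w / s0\<^sup>2 - 1) = norm (w - s0\<^sup>2) / norm (s0\<^sup>2)"
      by (simp add: norm_divide)
    also have "\<dots> < 1"
      using that assms by (simp add: dist_norm norm_minus_commute)
    finally show ?thesis
      using abs_Re_le_cmod[of "w / s0\<^sup>2 - 1"] by simp
  qed
  have "w / s0\<^sup>2 \<notin> \<real>\<^sub>\<le>\<^sub>0" if "w \<in> ball (s0\<^sup>2) (norm (s0\<^sup>2))" for w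
    using Re_pos[OF that] by (auto simp: complex_nonpos_Reals_iff)
  then show "sqrt_branch s0 holomorphic_on ball (s0\<^sup>2) (norm (s0\<^sup>2))"
    unfolding sqrt_branch_def[abs_def] using assms by (intro holomorphic_intros) auto
  show "\<And>w. w \<in> ball (s0\<^sup>2) (norm (s0\<^sup>2)) \<Longrightarrow> sqrt_branch s0 w \<noteq> 0"
    unfolding sqrt_branch_def using Re_pos assms by fastforce
  show "sqrt_branch s0 (s0\<^sup>2) = s0"
    using assms by (simp add: sqrt_branch_def)
  have "((\<lambda>w. w / s0\<^sup>2) has_field_derivative 1 / s0\<^sup>2) (at (s0\<^sup>2))"
    using DERIV_cdivide[OF DERIV_ident, of "s0\<^sup>2" "s0\<^sup>2"] by simp
  then have "((\<lambda>w. csqrt (w / s0\<^sup>2)) has_field_derivative (1 / s0\<^sup>2) / (2 * csqrt (s0\<^sup>2 / s0\<^sup>2)))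
      (at (s0\<^sup>2))"
    by (rule has_field_derivative_csqrt') (use assms in simp)
  from DERIV_cmult[OF this, of s0]
  show "(sqrt_branch s0 has_field_derivative inverse (2 * s0)) (at (s0\<^sup>2))"
    unfolding sqrt_branch_def[abs_def] using assms by (simp add: field_simps power2_eq_square)
qed

lemma Xfun_sqrt_residues_cancel:
  fixes i1 i2 :: "'n::finite"
  assumes "i1 \<noteq> i2" "k \<in> Iset i1 i2 K p" "(su, sv, st, sq) \<in> generic_params (int K + \<bar>p\<bar>)"
  shows "let s0 = su i2 * sq powi p in
           residue (\<lambda>w. Xfun k (su(i1 := sqrt_branch s0 w)) sv st sq) (s0 ^ 2)
         + residue (\<lambda>w. Xfun (swapmap i1 i2 p k) (su(i1 := sqrt_branch s0 w)) sv st sq) (s0 ^ 2) = 0"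
proof -
  define s0 where "s0 = su i2 * sq powi p"
  have "s0 \<noteq> 0"
    using assms(3) by (simp add: generic_params_def s0_def)
  then have "residue (\<lambda>w. Xfun k (su(i1 := sqrt_branch s0 w)) sv st sq) (s0 ^ 2)
      + residue (\<lambda>w. Xfun (swapmap i1 i2 p k) (su(i1 := sqrt_branch s0 w)) sv st sq) (s0 ^ 2) = 0"
    using assms Iset_le[OF assms(2)] sqrt_branch[OF \<open>s0 \<noteq> 0\<close>]
    by (intro Xfun_residues_cancel[of i1 i2 su sv st sq "int K + \<bar>p\<bar>"])
      (auto simp: Iset_def s0_def)
  then show ?thesis
    by (simp add: s0_def)
qed

section \<open>The residues of \<open>Y\<close>\<close>

lemma Yfun_eq_Xfun: "Yfun k su sv st sq = Xfun k (\<lambda>i. inverse (sv i)) (\<lambda>a. inverse (su a)) st sq"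
proof -
  have "(\<Prod>(a, b)\<in>{(a, b). a \<noteq> b}.
        qpoch sq (inverse st * inverse sq ^ k a * sv a / sv b) (k b) / qpoch sq (inverse sq ^ k a * sv a / sv b) (k b))
      = (\<Prod>(i, j)\<in>{(i, j). i \<noteq> j}.
        qpoch sq (inverse st * inverse sq ^ k j * inverse (sv i) / inverse (sv j)) (k i)
        / qpoch sq (inverse sq ^ k j * inverse (sv i) / inverse (sv j)) (k i))"
    and "(\<Prod>(a, j)\<in>UNIV. qpoch sq (st * su j / sv a) (k a) / qpoch sq (su j / sv a) (k a))
      = (\<Prod>(a, j)\<in>UNIV. qpoch sq (st * inverse (sv j) / inverse (su a)) (k j)
        / qpoch sq (inverse (sv j) / inverse (su a)) (k j))"
    by (rule prod.reindex_bij_witness[where i = "\<lambda>(a, b). (b, a)" and j = "\<lambda>(a, b). (b, a)"];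
        auto simp: divide_inverse ac_simps)+
  then show ?thesis
    unfolding Yfun_def Xfun_def by simp
qed

lemma generic_params_swap_inverse:
  fixes su sv :: "'n::finite \<Rightarrow> complex"
  assumes "(su, sv, st, sq) \<in> generic_params M"
  shows "(\<lambda>i. inverse (sv i), \<lambda>a. inverse (su a), st, sq) \<in> generic_params M"
proof -
  have "inverse (sv i) / inverse (sv j) = sv j / sv i" "inverse (su i) / inverse (su j) = su j / su i"
    "inverse (sv j) / inverse (su a) = su a / sv j" for i j a
    by (simp_all add: divide_inverse ac_simps)
  with assms show ?thesis
    unfolding generic_params_def by (auto simp del: inverse_divide times_divide_eq_right)
qed

text \<open>In the variables \<open>(v\<^sup>-\<^sup>1, u\<^sup>-\<^sup>1)\<close> the pole \<open>v\<^sub>2 = v\<^sub>1 q\<^sup>p\<close> of \<open>Y\<close> becomes the pole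
  \<open>u\<^sub>2 = u\<^sub>1 q\<^sup>-\<^sup>p\<close> of \<open>X\<close>, and \<open>\<phi>\<^sub>p(k)\<close> lies in \<open>I\<^sub>-\<^sub>p\<close> for the swapped pair with \<open>\<phi>\<^sub>-\<^sub>p(\<phi>\<^sub>p(k)) = k\<close>.\<close>
lemma Yfun_sqrt_residues_cancel:
  fixes i1 i2 :: "'n::finite"
  assumes distinct: "i1 \<noteq> i2" and k: "k \<in> Iset i1 i2 K p"
    and generic: "(su, sv, st, sq) \<in> generic_params (int K + \<bar>p\<bar>)"
  shows "let s0 = sv i1 * sq powi p in
           residue (\<lambda>w. Yfun k su (sv(i2 := sqrt_branch s0 w)) st sq) (s0 ^ 2)
         + residue (\<lambda>w. Yfun (swapmap i1 i2 p k) su (sv(i2 := sqrt_branch s0 w)) st sq) (s0 ^ 2) = 0"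
proof -
  define s0 where "s0 = sv i1 * sq powi p"
  define U where "U i = inverse (sv i)" for i
  define V where "V a = inverse (su a)" for a
  define k' where "k' = swapmap i1 i2 p k"
  define x where "x w = inverse (sqrt_branch s0 w)" for w
  have "sq \<noteq> 0" "s0 \<noteq> 0"
    using generic by (simp_all add: generic_params_def s0_def)
  note branch = sqrt_branch[OF \<open>s0 \<noteq> 0\<close>]
  have "(U, V, st, sq) \<in> generic_params (int K + \<bar>- p\<bar>)"
    using generic_params_swap_inverse[OF generic] by (simp add: U_def[abs_def] V_def[abs_def])
  moreover have "k' \<in> Iset i2 i1 K (- p)" "swapmap i2 i1 (- p) k' = k"
    using swapmap_Iset[OF distinct k] by (simp_all add: k'_def IIset_eq_Iset swapmap_commute[OF distinct])
  moreover have "x holomorphic_on ball (s0\<^sup>2) (norm (s0\<^sup>2))"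
    unfolding x_def using branch by (auto intro!: holomorphic_intros)
  moreover have "x (s0\<^sup>2) = U i1 * sq powi - p" "\<And>w. w \<in> ball (s0\<^sup>2) (norm (s0\<^sup>2)) \<Longrightarrow> x w \<noteq> 0"
    using branch by (auto simp: x_def U_def s0_def power_int_minus)
  moreover have "(x has_field_derivative - (inverse s0 * inverse (2 * s0) * inverse s0)) (at (s0\<^sup>2))"
    unfolding x_def using DERIV_inverse'[OF branch(4)] branch(3) \<open>s0 \<noteq> 0\<close> by simp
  ultimately have "residue (\<lambda>w. Xfun k' (U(i2 := x w)) V st sq) (s0\<^sup>2)
      + residue (\<lambda>w. Xfun (swapmap i2 i1 (- p) k') (U(i2 := x w)) V st sq) (s0\<^sup>2) = 0"
    using distinct \<open>s0 \<noteq> 0\<close> Iset_le[of k' i2 i1 K "- p"]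
    by (intro Xfun_residues_cancel[of i2 i1 U V st sq "int K + \<bar>- p\<bar>" k' "- p",
          where A = "ball (s0\<^sup>2) (norm (s0\<^sup>2))" and x' = "- (inverse s0 * inverse (2 * s0) * inverse s0)"])
      (auto simp: Iset_def)
  moreover have "Yfun kk su (sv(i2 := sqrt_branch s0 w)) st sq = Xfun kk (U(i2 := x w)) V st sq" for kk w
  proof -
    have "(\<lambda>i. inverse ((sv(i2 := sqrt_branch s0 w)) i)) = U(i2 := x w)"
      by (auto simp: U_def x_def)
    then show ?thesis
      by (simp add: Yfun_eq_Xfun V_def[abs_def])
  qed
  ultimately show ?thesis
    using \<open>swapmap i2 i1 (- p) k' = k\<close> by (simp add: s0_def k'_def add.commute)
qed

section \<open>Generic parameters form an open dense set\<close>

lemma continuous_fun_apply [continuous_intros]: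
  fixes f :: "'a::t2_space \<Rightarrow> 'b::countable \<Rightarrow> 'c::metric_space"
  assumes "continuous (at x within S) f"
  shows "continuous (at x within S) (\<lambda>y. f y i)"
proof -
  have "isCont (\<lambda>h. h i) (f x)"
    using continuous_on_product_coordinates[of i] continuous_on_eq_continuous_at[OF open_UNIV] by blast
  from continuous_within_compose3[OF this assms] show ?thesis .
qed

lemma eventually_nhds_neq:
  fixes f :: "'a::t2_space \<Rightarrow> 'b::t2_space"
  shows "isCont f z \<Longrightarrow> f z \<noteq> c \<Longrightarrow> \<forall>\<^sub>F y in nhds z. f y \<noteq> c"
  by (rule tendsto_imp_eventually_ne) (simp_all add: isCont_def tendsto_at_iff_tendsto_nhds)

lemma open_generic_params: "open (generic_params M :: (('n::finite \<Rightarrow> complex) \<times> _) set)"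
proof (subst open_subopen, intro ballI)
  fix z :: "('n::finite \<Rightarrow> complex) \<times> ('n \<Rightarrow> complex) \<times> complex \<times> complex"
  assume "z \<in> generic_params M"
  then obtain su sv st sq where z: "z = (su, sv, st, sq)" and T: "st \<noteq> 0" and Q: "sq \<noteq> 0"
    and U: "\<And>i. su i \<noteq> 0" and V: "\<And>a. sv a \<noteq> 0"
    and gen_Q: "\<forall>m\<in>{-M..M} - {0}. (sq powi m)\<^sup>2 \<noteq> 1"
    and gen_UV: "\<forall>m\<in>{-M..M}. \<forall>i. \<forall>j\<in>- {i}. (sq powi m * (su i / su j))\<^sup>2 \<noteq> 1 \<and> (sq powi m * (sv i / sv j))\<^sup>2 \<noteq> 1"
    and gen_cross: "\<forall>m\<in>{-M..M}. \<forall>j a. (sq powi m * (su j / sv a))\<^sup>2 \<noteq> 1"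
    unfolding generic_params_def by auto
  define pU where "pU y = fst y" for y :: "('n \<Rightarrow> complex) \<times> ('n \<Rightarrow> complex) \<times> complex \<times> complex"
  define pV where "pV y = fst (snd y)" for y :: "('n \<Rightarrow> complex) \<times> ('n \<Rightarrow> complex) \<times> complex \<times> complex"
  define pT where "pT y = fst (snd (snd y))" for y :: "('n \<Rightarrow> complex) \<times> ('n \<Rightarrow> complex) \<times> complex \<times> complex"
  define pQ where "pQ y = snd (snd (snd y))" for y :: "('n \<Rightarrow> complex) \<times> ('n \<Rightarrow> complex) \<times> complex \<times> complex"
  have at_z: "pU z = su" "pV z = sv" "pT z = st" "pQ z = sq"
    by (simp_all add: z pU_def pV_def pT_def pQ_def)
  have cont: "isCont (\<lambda>y. pU y i) z" "isCont (\<lambda>y. pV y i) z" "isCont pT z" "isCont pQ z" for i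
    unfolding pU_def pV_def pT_def pQ_def by (intro continuous_intros)+
  have bracket: "\<forall>\<^sub>F y in nhds z. (pQ y powi m * (f y / g y))\<^sup>2 \<noteq> 1"
    if "isCont f z" "isCont g z" "g z \<noteq> 0" "(sq powi m * (f z / g z))\<^sup>2 \<noteq> 1" for f g m
    using that Q
    by (intro eventually_nhds_neq isCont_power isCont_mult isCont_divide continuous_at_within_power_int cont)
      (auto simp: at_z)
  have "\<forall>\<^sub>F y in nhds z. pT y \<noteq> 0 \<and> pQ y \<noteq> 0 \<and> (\<forall>i. pU y i \<noteq> 0) \<and> (\<forall>a. pV y a \<noteq> 0)"
    using T Q U V
    by (intro eventually_conj eventually_all_finite eventually_nhds_neq cont) (auto simp: at_z)
  moreover have "\<forall>\<^sub>F y in nhds z. \<forall>m\<in>{-M..M} - {0}. (pQ y powi m * (1 / 1))\<^sup>2 \<noteq> 1"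
    using gen_Q by (intro eventually_ball_finite ballI bracket continuous_const) auto
  moreover have "\<forall>\<^sub>F y in nhds z. \<forall>m\<in>{-M..M}. \<forall>i. \<forall>j\<in>- {i}.
      (pQ y powi m * (pU y i / pU y j))\<^sup>2 \<noteq> 1 \<and> (pQ y powi m * (pV y i / pV y j))\<^sup>2 \<noteq> 1"
    using gen_UV U V
    by (intro eventually_ball_finite eventually_all_finite ballI eventually_conj bracket cont) (auto simp: at_z)
  moreover have "\<forall>\<^sub>F y in nhds z. \<forall>m\<in>{-M..M}. \<forall>j a. (pQ y powi m * (pU y j / pV y a))\<^sup>2 \<noteq> 1"
    using gen_cross V
    by (intro eventually_ball_finite eventually_all_finite ballI bracket cont) (auto simp: at_z)
  ultimately have "\<forall>\<^sub>F y in nhds z. y \<in> generic_params M"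
    by eventually_elim (simp add: generic_params_def case_prod_unfold pU_def pV_def pT_def pQ_def)
  then show "\<exists>T. open T \<and> z \<in> T \<and> T \<subseteq> generic_params M"
    unfolding eventually_nhds by auto
qed

lemma path_start_in_closure:
  fixes \<gamma> :: "real \<Rightarrow> 'a::topological_space"
  assumes "continuous_on UNIV \<gamma>" and "\<forall>\<^sub>F t in at_right 0. \<gamma> t \<in> S"
  shows "\<gamma> 0 \<in> closure S"
proof (rule Lim_in_closed_set[OF closed_closure _ _ tendsto_mono[OF at_le]])
  show "\<forall>\<^sub>F t in at_right 0. \<gamma> t \<in> closure S"
    using assms(2) by (rule eventually_mono) (use closure_subset in auto)
  show "(\<gamma> \<longlongrightarrow> \<gamma> 0) (at 0)"
    using assms(1) by (simp add: continuous_on_def)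
qed simp_all

lemma eventually_at_right_exp_neq_1:
  fixes d :: int and c :: complex
  assumes "d \<noteq> 0"
  shows "\<forall>\<^sub>F t in at_right 0. c * exp (of_real (t * of_int d)) \<noteq> 1"
proof (cases "c = 1")
  case True
  show ?thesis
    using eventually_at_right_less[of "0::real"]
  proof eventually_elim
    case (elim t)
    then have "exp (t * of_int d) \<noteq> 1"
      using assms by simp
    then show ?case
      using True by (metis exp_of_real mult_1 of_real_eq_1_iff)
  qed
next
  case False
  have "((\<lambda>t. c * exp (of_real (t * of_int d))) \<longlongrightarrow> c * exp (of_real (0 * of_int d))) (at_right (0::real))"
    by (intro tendsto_intros)
  then show ?thesis
    using False by (intro tendsto_imp_eventually_ne) auto
qed

lemma exp_path_bracket:
  fixes t :: real and sq a b :: complex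
  shows "((sq * exp (of_real t)) powi m * ((a * exp (of_real t) ^ r1) / (b * exp (of_real t) ^ r2)))\<^sup>2
       = (sq powi m * (a / b))\<^sup>2 * exp (of_real (t * of_int (2 * (m + int r1 - int r2))))"
proof -
  define x1 where "x1 = exp (of_int m * (of_real t :: complex))"
  define x2 where "x2 = exp (of_nat r1 * (of_real t :: complex))"
  define x3 where "x3 = exp (of_nat r2 * (of_real t :: complex))"
  have "exp (of_real t :: complex) powi m = x1" "exp (of_real t :: complex) ^ r1 = x2"
    "exp (of_real t :: complex) ^ r2 = x3"
    unfolding x1_def x2_def x3_def by (simp_all add: exp_power_int flip: exp_of_nat_mult)
  moreover have "x1 * x2 / x3 = exp (of_int m * of_real t + of_nat r1 * of_real t - of_nat r2 * of_real t)"
    unfolding x1_def x2_def x3_def by (simp add: exp_add exp_diff)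
  then have "(x1 * x2 / x3)\<^sup>2 = exp (of_real (t * of_int (2 * (m + int r1 - int r2))))"
    by (simp add: exp_of_nat_mult[symmetric] algebra_simps)
  ultimately show ?thesis
    by (simp add: power_int_mult_distrib power_mult_distrib divide_inverse inverse_mult_distrib ac_simps)
qed

lemma int_add_mult_neq_0: "x \<noteq> 0 \<Longrightarrow> \<bar>m\<bar> < N \<Longrightarrow> m + N * x \<noteq> (0::int)"
proof
  assume x: "x \<noteq> 0" and m: "\<bar>m\<bar> < N" and sum: "m + N * x = 0"
  have "0 \<le> N" "1 \<le> \<bar>x\<bar>"
    using x m by auto
  then have "N \<le> N * \<bar>x\<bar>"
    by (simp add: mult_le_cancel_left1)
  moreover have "\<bar>m\<bar> = N * \<bar>x\<bar>"
    using sum \<open>0 \<le> N\<close> by (simp add: abs_mult eq_neg_iff_add_eq_0[symmetric])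
  ultimately show False
    using m by simp
qed

lemma nonzero_params_in_closure_generic_params:
  fixes su sv :: "'n::finite \<Rightarrow> complex"
  assumes "st \<noteq> 0" "sq \<noteq> 0" "\<forall>i. su i \<noteq> 0" "\<forall>a. sv a \<noteq> 0"
  shows "(su, sv, st, sq) \<in> closure (generic_params M)"
proof -
  txt \<open>Along \<open>\<gamma>\<close> each condition becomes \<open>c e\<^sup>d\<^sup>t \<noteq> 1\<close> with an integer \<open>d \<noteq> 0\<close>: the weights
    \<open>rU\<close>, \<open>rV\<close> are spaced by more than \<open>2M\<close> and \<open>rU - rV\<close> is an odd multiple of \<open>N\<close>.\<close>
  define N :: nat where "N = 2 * nat \<bar>M\<bar> + 1"
  define rU where "rU i = 2 * N * to_nat i" for i :: 'n
  define rV where "rV a = 2 * N * to_nat a + N" for a :: 'n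
  define E where "E t = exp (of_real t :: complex)" for t :: real
  define \<gamma> where "\<gamma> t = (\<lambda>i. su i * E t ^ rU i, \<lambda>a. sv a * E t ^ rV a, st, sq * E t)" for t
  have near: "\<forall>\<^sub>F t in at_right 0. ((sq * E t) powi m * ((a * E t ^ r1) / (b * E t ^ r2)))\<^sup>2 \<noteq> 1"
    if "m + int r1 - int r2 \<noteq> 0" for m a b r1 r2
    unfolding E_def exp_path_bracket by (rule eventually_at_right_exp_neq_1) (use that in simp)
  have m: "\<bar>m\<bar> < int N" if "m \<in> {-M..M}" for m
    using that by (auto simp: N_def)
  have sep: "m + int (rU i) - int (rU j) \<noteq> 0" "m + int (rV i) - int (rV j) \<noteq> 0"
    if "m \<in> {-M..M}" "i \<noteq> j" for m i j
  proof -
    have "2 * (int (to_nat i) - int (to_nat j)) \<noteq> 0"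
      using inj_eq[OF inj_to_nat, of i j] that(2) by simp
    from int_add_mult_neq_0[OF this m[OF that(1)]]
    show "m + int (rU i) - int (rU j) \<noteq> 0" "m + int (rV i) - int (rV j) \<noteq> 0"
      by (simp_all add: rU_def rV_def algebra_simps)
  qed
  have sep_cross: "m + int (rU j) - int (rV a) \<noteq> 0" if "m \<in> {-M..M}" for m j a
  proof -
    have "2 * (int (to_nat j) - int (to_nat a)) - 1 \<noteq> 0"
      by presburger
    from int_add_mult_neq_0[OF this m[OF that]]
    show ?thesis
      by (simp add: rU_def rV_def algebra_simps)
  qed
  have "\<forall>\<^sub>F t in at_right 0. \<gamma> t \<in> generic_params M"
  proof -
    have "\<forall>\<^sub>F t in at_right 0. \<forall>m\<in>{-M..M} - {0}. ((sq * E t) powi m * ((1 * E t ^ 0) / (1 * E t ^ 0)))\<^sup>2 \<noteq> 1"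
      by (intro eventually_ball_finite ballI near) auto
    moreover have "\<forall>\<^sub>F t in at_right 0. \<forall>m\<in>{-M..M}. \<forall>i. \<forall>j\<in>- {i}.
        ((sq * E t) powi m * ((su i * E t ^ rU i) / (su j * E t ^ rU j)))\<^sup>2 \<noteq> 1
      \<and> ((sq * E t) powi m * ((sv i * E t ^ rV i) / (sv j * E t ^ rV j)))\<^sup>2 \<noteq> 1"
      using sep by (intro eventually_ball_finite eventually_all_finite ballI eventually_conj near) auto
    moreover have "\<forall>\<^sub>F t in at_right 0. \<forall>m\<in>{-M..M}. \<forall>j a.
        ((sq * E t) powi m * ((su j * E t ^ rU j) / (sv a * E t ^ rV a)))\<^sup>2 \<noteq> 1"
      using sep_cross by (intro eventually_ball_finite eventually_all_finite ballI near) auto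
    ultimately show ?thesis
      by eventually_elim (use assms in \<open>simp add: generic_params_def \<gamma>_def E_def\<close>)
  qed
  moreover have "continuous_on UNIV \<gamma>"
    unfolding \<gamma>_def E_def by (intro continuous_intros continuous_on_coordinatewise_then_product)
  ultimately show ?thesis
    using path_start_in_closure[of \<gamma>] by (simp add: \<gamma>_def E_def)
qed

lemma eventually_at_right_add_neq_0: "\<forall>\<^sub>F t in at_right 0. c + of_real t \<noteq> (0::complex)"
proof (cases "c = 0")
  case True
  show ?thesis
    using eventually_at_right_less[of "0::real"] by eventually_elim (simp add: True)
next
  case False
  have "((\<lambda>t. c + of_real t) \<longlongrightarrow> c + of_real 0) (at_right (0::real))"
    by (intro tendsto_intros)
  then show ?thesis
    using False by (intro tendsto_imp_eventually_ne) auto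
qed

lemma closure_generic_params: "closure (generic_params M :: (('n::finite \<Rightarrow> complex) \<times> _) set) = UNIV"
proof -
  let ?nonzero = "{(su, sv, st, sq). st \<noteq> 0 \<and> sq \<noteq> 0 \<and> (\<forall>i. su i \<noteq> 0) \<and> (\<forall>a. sv a \<noteq> 0)}
    :: (('n \<Rightarrow> complex) \<times> ('n \<Rightarrow> complex) \<times> complex \<times> complex) set"
  have "z \<in> closure ?nonzero" for z
  proof -
    obtain su sv st sq where z: "z = (su, sv, st, sq)"
      by (cases z)
    define \<gamma> where "\<gamma> t = (\<lambda>i. su i + of_real t, \<lambda>a. sv a + of_real t, st + of_real t, sq + of_real t)" for t
    have "continuous_on UNIV \<gamma>"
      unfolding \<gamma>_def by (intro continuous_intros continuous_on_coordinatewise_then_product)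
    moreover have "\<forall>\<^sub>F t in at_right 0. \<gamma> t \<in> ?nonzero"
      using eventually_at_right_add_neq_0[of st] eventually_at_right_add_neq_0[of sq]
        eventually_all_finite[OF eventually_at_right_add_neq_0, of su]
        eventually_all_finite[OF eventually_at_right_add_neq_0, of sv]
      by eventually_elim (simp add: \<gamma>_def)
    ultimately show ?thesis
      using path_start_in_closure[of \<gamma>] by (simp add: \<gamma>_def z)
  qed
  moreover have "closure ?nonzero \<subseteq> closure (generic_params M)"
    using nonzero_params_in_closure_generic_params by (intro closure_minimal) auto
  ultimately show ?thesis
    by blast
qed

theorem lemma1:
  fixes i1 i2 :: "'n::finite" and K :: nat and p :: int
  assumes "i1 \<noteq> i2"
  shows "bij_betw (swapmap i1 i2 p) (Iset i1 i2 K p) (IIset i1 i2 K p)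
       \<and> bij_betw (swapmap i1 i2 p) (IIset i1 i2 K p) (Iset i1 i2 K p)
       \<and> (\<forall>k\<in>Iset i1 i2 K p.
            (\<exists>G :: (('n \<Rightarrow> complex) \<times> ('n \<Rightarrow> complex) \<times> complex \<times> complex) set.
               open G \<and> closure G = UNIV \<and>
               (\<forall>su sv st sq. (su, sv, st, sq) \<in> G \<longrightarrow>
                  (let s0 = su i2 * sq powi p in
                    residue (\<lambda>w. Xfun k (su(i1 := sqrt_branch s0 w)) sv st sq) (s0 ^ 2)
                  + residue (\<lambda>w. Xfun (swapmap i1 i2 p k) (su(i1 := sqrt_branch s0 w)) sv st sq) (s0 ^ 2)
                  = 0))))
       \<and> (\<forall>k\<in>Iset i1 i2 K p.
            (\<exists>G :: (('n \<Rightarrow> complex) \<times> ('n \<Rightarrow> complex) \<times> complex \<times> complex) set.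
               open G \<and> closure G = UNIV \<and>
               (\<forall>su sv st sq. (su, sv, st, sq) \<in> G \<longrightarrow>
                  (let s0 = sv i1 * sq powi p in
                    residue (\<lambda>w. Yfun k su (sv(i2 := sqrt_branch s0 w)) st sq) (s0 ^ 2)
                  + residue (\<lambda>w. Yfun (swapmap i1 i2 p k) su (sv(i2 := sqrt_branch s0 w)) st sq) (s0 ^ 2)
                  = 0))))"
proof -
  let ?G = "generic_params (int K + \<bar>p\<bar>) :: (('n \<Rightarrow> complex) \<times> _) set"
  have "open ?G" "closure ?G = UNIV"
    by (rule open_generic_params closure_generic_params)+
  then show ?thesis
    by (intro conjI ballI allI impI exI[of _ ?G] bij_betw_swapmap[OF assms]
        Xfun_sqrt_residues_cancel[OF assms] Yfun_sqrt_residues_cancel[OF assms]) auto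
qed

end
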